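(* Consider the event-triggered closed-loop system described in the context, with $\hat\tau$ and $\psi$ defined there, and let $a=\lambda_1^p\psi(\hat\tau,\lambda_2)$, $b=\lambda_3^p\psi(\hat\tau,\lambda_2)$. Then for every $k$, $$\int_{t_k}^{\hat t_k}\|\varepsilon(\tau)\|^p\,d\tau\le a\int_{t_k}^{\hat t_k}\|\xi(\tau)\|^p\,d\tau+b\int_{t_k}^{\hat t_k}\|d(\tau)\|^p\,d\tau.$$
   Context: Plant: $\dot\xi=f(\xi,d)+g(\xi)u$, $z=h(\xi,d)$, with state $\xi\in\mathbb{R}^n$, input $u\in\mathbb{R}^m$, disturbance $d$ a measurable signal with values in $\mathbb{R}^q$, $\int_{t_0}^\infty\|d\|^p<\infty$ and $\|d\|_\infty<\infty$, output $z\in\mathbb{R}^s$; $f,g,h$ locally Lipschitz, $f(0,0)=0$, $h(0,0)=0$. A locally Lipschitz feedback $\gamma$ is implemented with sampling times $t_0<t_1<\dots$: $u(t)=\gamma(\xi(t_k))$ and $\varepsilon(t)=\xi(t_k)-\xi(t)$ on $[t_k,t_{k+1})$, so $\dot\xi=f(\xi,d)+g(\xi)\gamma(\xi+\varepsilon)$. Let $p>1$ (exponent of the $\mathcal{L}_p$ performance), $q$ with $1/p+1/q=1$. Constants $\lambda_1,\lambda_2,\lambda_3\ge0$ (non-decreasing functions of $\|\xi_0\|,\|d\|_\infty$) satisfy, along trajectories, $\|\dot\xi\|\le\lambda_1\|\xi\|+\lambda_2\|\varepsilon\|+\lambda_3\|d\|$. Define $\psi(t,\lambda_2)=\frac{2^{2p}(p-1)^{p-1}}{\lambda_2^p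 p^p}\big(e^{\frac{\lambda_2 p}{2(p-1)}t}-1\big)^{p-1}\big(e^{\frac{\lambda_2 p}{2}t}-1\big)$. With constants $c_1,c_2,c_3,\bar c_3,\mu>0$, $\sigma<1$, $\lambda>0$ and desired gain $\mu_d>\mu$ (these arise from Lyapunov-type estimates for the system), let $B_1=c_1\sigma-(\bar c_3\lambda)^q/q$, $B_3=\lambda(\mu_d^p-\mu^p)-c_3$, $c=c_2+\lambda_2^p/p$, assumed $B_1,B_3>0$; $\tau_i=\sup\{t\ge0:\lambda_i^p\psi(t,\lambda_2)<B_i/c\}$, $i\in\{1,3\}$; $\hat\tau=\min\{\tau_1,\tau_3\}$ and $\hat t_k=t_k+\hat\tau$. The sampling times satisfy $t_{k+1}\ge\hat t_k$ or the inequality is considered on the interval where $\varepsilon(t)=\xi(t_k)-\xi(t)$ is defined. *)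

theory Defs
  imports "HOL-Analysis.Analysis"
begin

definition loc_lipschitz :: "('a::metric_space \<Rightarrow> 'b::metric_space) \<Rightarrow> bool" where
  "loc_lipschitz F \<longleftrightarrow> (\<forall>x. \<exists>e>0. \<exists>L. L-lipschitz_on (cball x e) F)"

definition psi :: "real \<Rightarrow> real \<Rightarrow> real \<Rightarrow> real" where
  "psi p l2 t =
     2 powr (2 * p) * (p - 1) powr (p - 1) / (l2 powr p * p powr p)
     * (exp (l2 * p / (2 * (p - 1)) * t) - 1) powr (p - 1)
     * (exp (l2 * p / 2 * t) - 1)"

definition tau_of :: "real \<Rightarrow> real \<Rightarrow> real \<Rightarrow> real \<Rightarrow> real \<Rightarrow> real" where
  "tau_of p l2 li Bi c = Sup {s. s \<ge> 0 \<and> li powr p * psi p l2 s < Bi / c}"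

end

theory Submission
  imports Defs
begin

text \<open>
  On a sampling interval \<open>[t\<^sub>k, t\<^sub>k + T]\<close> the error \<open>e s = norm (\<xi> t\<^sub>k - \<xi> s)\<close> satisfies
  \<open>e s \<le> \<integral>\<^sub>t\<^sub>k\<^sup>s (w + \<lambda>\<^sub>2 e)\<close> with \<open>w = \<lambda>\<^sub>1 norm \<xi> + \<lambda>\<^sub>3 norm d\<close>. By Gronwall's inequality
  \<open>e s\<close> is at most the convolution \<open>\<integral>\<^sub>t\<^sub>k\<^sup>s exp (\<lambda>\<^sub>2 (s - r)) w r dr\<close>. Splitting the kernel
  into two factors \<open>exp (\<lambda>\<^sub>2 (s - r) / 2)\<close> and applying Hoelder's inequality bounds \<open>e s ^ p\<close>
  by an exponential in \<open>s\<close> times \<open>\<integral> w ^ p\<close>; integrating over \<open>s\<close> gives exactly the constant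
  \<open>\<psi>(T) / 2 ^ p\<close>. Since \<open>(x + y) ^ p \<le> 2 ^ (p - 1) (x ^ p + y ^ p)\<close>, the estimate even holds
  with \<open>\<psi>(T) / 2\<close>, and \<open>\<psi>\<close> is increasing in \<open>T\<close>.
\<close>

lemma integrable_on_bounded_measurable_real:
  fixes f :: "real \<Rightarrow> real"
  assumes "f \<in> borel_measurable (lebesgue_on {a..b})" "bounded (f ` {a..b})"
  shows "f integrable_on {a..b}"
proof -
  obtain M where "\<forall>y\<in>f ` {a..b}. norm y \<le> M"
    using assms(2) by (auto simp: bounded_iff)
  then have M: "\<bar>f x\<bar> \<le> M" if "x \<in> {a..b}" for x
    using that by auto
  show ?thesis
    by (rule measurable_bounded_by_integrable_imp_integrable_real[where g="\<lambda>_. M"])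
       (use assms(1) M in auto)
qed

lemma integrable_on_powr_bounded_measurable:
  fixes f :: "real \<Rightarrow> real"
  assumes f: "f \<in> borel_measurable (lebesgue_on {a..b})" "bounded (f ` {a..b})"
    and f0: "\<And>x. x \<in> {a..b} \<Longrightarrow> 0 \<le> f x" and p: "p \<ge> 0"
  shows "(\<lambda>x. f x powr p) integrable_on {a..b}"
proof (rule integrable_on_bounded_measurable_real)
  show "(\<lambda>x. f x powr p) \<in> borel_measurable (lebesgue_on {a..b})"
    using f(1) by measurable
  obtain M where "\<forall>y\<in>f ` {a..b}. norm y \<le> M"
    using f(2) by (auto simp: bounded_iff)
  then have "\<bar>f x\<bar> \<le> M" if "x \<in> {a..b}" for x
    using that by auto
  then have "norm y \<le> M powr p" if "y \<in> (\<lambda>x. f x powr p) ` {a..b}" for y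
    using that f0 p by (auto simp: powr_mono2)
  then show "bounded ((\<lambda>x. f x powr p) ` {a..b})"
    by (rule boundedI)
qed

lemma integrable_on_continuous_mult_bounded_measurable:
  fixes c h :: "real \<Rightarrow> real"
  assumes c: "continuous_on UNIV c" and h: "h \<in> borel_measurable lebesgue" and hM: "\<And>x. \<bar>h x\<bar> \<le> M"
  shows "(\<lambda>r. c r * h r) integrable_on {x..y}"
proof (rule integrable_on_bounded_measurable_real)
  have "c \<in> borel_measurable lebesgue"
    using c by (intro measurable_completion) (simp add: borel_measurable_continuous_onI)
  then show "(\<lambda>r. c r * h r) \<in> borel_measurable (lebesgue_on {x..y})"
    using h by (simp add: measurable_restrict_space1)
  have "bounded (c ` {x..y})"
    by (intro compact_imp_bounded compact_continuous_image continuous_on_subset[OF c]) auto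
  then obtain B where "\<forall>z\<in>c ` {x..y}. norm z \<le> B"
    by (auto simp: bounded_iff)
  then have B: "\<bar>c r\<bar> \<le> B" if "r \<in> {x..y}" for r
    using that by auto
  have "\<bar>c r * h r\<bar> \<le> B * M" if "r \<in> {x..y}" for r
    unfolding abs_mult using B[OF that] hM[of r] by (meson abs_ge_zero mult_mono order_trans)
  then show "bounded ((\<lambda>r. c r * h r) ` {x..y})"
    by (intro boundedI[where B="B * M"]) auto
qed

lemma integral_cong_AE_lborel:
  fixes f g :: "'a::euclidean_space \<Rightarrow> real"
  assumes "AE x in lborel. f x = g x"
  shows "integral S f = integral S g"
proof -
  have "\<And>I. (f has_integral I) S = (g has_integral I) S"
    by (rule has_integral_AE) (use assms in auto)
  then show ?thesis unfolding integral_def integrable_on_def by simp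
qed

lemma has_integral_exp_mult_diff_upper:
  fixes c :: real
  assumes "c > 0" "a \<le> s"
  shows "((\<lambda>r. exp (c*(s-r))) has_integral (exp (c*(s-a)) - 1) / c) {a..s}"
proof -
  have "((\<lambda>r. exp (c*(s-r))) has_integral ((\<lambda>r. - exp (c*(s-r)) / c) s - (\<lambda>r. - exp (c*(s-r)) / c) a)) {a..s}"
    using assms
    by (intro fundamental_theorem_of_calculus)
       (auto intro!: derivative_eq_intros simp: has_real_derivative_iff_has_vector_derivative[symmetric])
  then show ?thesis using assms by (simp add: field_simps)
qed

lemma has_integral_exp_mult_diff_lower:
  fixes c :: real
  assumes "c > 0" "a \<le> s"
  shows "((\<lambda>r. exp (c*(r-a))) has_integral (exp (c*(s-a)) - 1) / c) {a..s}"
proof -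
  have "((\<lambda>r. exp (c*(r-a))) has_integral ((\<lambda>r. exp (c*(r-a)) / c) s - (\<lambda>r. exp (c*(r-a)) / c) a)) {a..s}"
    using assms
    by (intro fundamental_theorem_of_calculus)
       (auto intro!: derivative_eq_intros simp: has_real_derivative_iff_has_vector_derivative[symmetric])
  then show ?thesis using assms by (simp add: field_simps)
qed

lemma continuous_on_exp_convolution:
  fixes w :: "real \<Rightarrow> real"
  assumes "w \<in> borel_measurable lebesgue" "\<And>x. \<bar>w x\<bar> \<le> M"
  shows "continuous_on {a..b} (\<lambda>u. integral {a..u} (\<lambda>r. exp (l*(u-r)) * w r))"
proof -
  have "integral {a..u} (\<lambda>r. exp (l*(u-r)) * w r) = exp (l*u) * integral {a..u} (\<lambda>r. exp (-l*r) * w r)" for u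
  proof -
    have "integral {a..u} (\<lambda>r. exp (l*(u-r)) * w r) = integral {a..u} (\<lambda>r. exp (l*u) * (exp (-l*r) * w r))"
      by (rule integral_cong) (simp add: right_diff_distrib exp_diff exp_minus field_simps)
    then show ?thesis by simp
  qed
  moreover have "continuous_on {a..b} (\<lambda>u. exp (l*u) * integral {a..u} (\<lambda>r. exp (-l*r) * w r))"
    by (intro continuous_intros indefinite_integral_continuous_1
          integrable_on_continuous_mult_bounded_measurable[OF _ assms])
  ultimately show ?thesis by simp
qed

lemma integral_swap_triangle_nonneg:
  fixes k :: "real \<Rightarrow> real \<Rightarrow> real"
  assumes k_meas: "case_prod k \<in> borel_measurable (lborel \<Otimes>\<^sub>M lborel)" and k0: "\<And>u r. 0 \<le> k u r"
    and int_u: "\<And>u. u \<in> {a..s} \<Longrightarrow> k u integrable_on {a..u}"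
    and int_r: "\<And>r. r \<in> {a..s} \<Longrightarrow> (\<lambda>u. k u r) integrable_on {r..s}"
    and int_U: "(\<lambda>u. integral {a..u} (k u)) integrable_on {a..s}"
    and int_R: "(\<lambda>r. integral {r..s} (\<lambda>u. k u r)) integrable_on {a..s}"
  shows "integral {a..s} (\<lambda>u. integral {a..u} (k u)) = integral {a..s} (\<lambda>r. integral {r..s} (\<lambda>u. k u r))"
proof -
  define F where "F u r = (if a \<le> r \<and> r \<le> u \<and> u \<le> s then k u r else 0)" for u r
  have F_meas: "case_prod (\<lambda>u r. ennreal (F u r)) \<in> borel_measurable (lborel \<Otimes>\<^sub>M lborel)"
    unfolding F_def using k_meas by measurable
  have F_u: "(\<integral>\<^sup>+r. ennreal (F u r) \<partial>lborel) = ennreal (indicator {a..s} u * integral {a..u} (k u))" for u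
  proof (cases "u \<in> {a..s}")
    case True
    have "(\<integral>\<^sup>+r. ennreal (F u r) \<partial>lborel) = (\<integral>\<^sup>+r. ennreal (indicator {a..u} r * k u r) \<partial>lborel)"
      using True by (intro nn_integral_cong) (auto simp: F_def indicator_def)
    also have "\<dots> = ennreal (integral {a..u} (k u))"
      using int_u[OF True] k0 by (intro nn_integral_has_integral_lebesgue) auto
    finally show ?thesis
      using True by simp
  next
    case False
    then have "\<And>r. F u r = 0"
      by (auto simp: F_def)
    then show ?thesis
      using False by simp
  qed
  have F_r: "(\<integral>\<^sup>+u. ennreal (F u r) \<partial>lborel) = ennreal (indicator {a..s} r * integral {r..s} (\<lambda>u. k u r))" for r
  proof (cases "r \<in> {a..s}")
    case True
    have "(\<integral>\<^sup>+u. ennreal (F u r) \<partial>lborel) = (\<integral>\<^sup>+u. ennreal (indicator {r..s} u * k u r) \<partial>lborel)"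
      using True by (intro nn_integral_cong) (auto simp: F_def indicator_def)
    also have "\<dots> = ennreal (integral {r..s} (\<lambda>u. k u r))"
      using int_r[OF True] k0 by (intro nn_integral_has_integral_lebesgue) auto
    finally show ?thesis
      using True by simp
  next
    case False
    then have "\<And>u. F u r = 0"
      by (auto simp: F_def)
    then show ?thesis
      using False by simp
  qed
  have "ennreal (integral {a..s} (\<lambda>u. integral {a..u} (k u)))
      = (\<integral>\<^sup>+u. (\<integral>\<^sup>+r. ennreal (F u r) \<partial>lborel) \<partial>lborel)"
    unfolding F_u using int_U int_u k0
    by (intro nn_integral_has_integral_lebesgue[symmetric] integral_nonneg) auto
  also have "\<dots> = (\<integral>\<^sup>+r. (\<integral>\<^sup>+u. ennreal (F u r) \<partial>lborel) \<partial>lborel)"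
    by (rule lborel_pair.Fubini'[OF F_meas, symmetric])
  also have "\<dots> = ennreal (integral {a..s} (\<lambda>r. integral {r..s} (\<lambda>u. k u r)))"
    unfolding F_r using int_R int_r k0
    by (intro nn_integral_has_integral_lebesgue integral_nonneg) auto
  finally show ?thesis
    using int_U int_u int_R int_r k0 by (subst (asm) ennreal_inj) (auto intro!: integral_nonneg)
qed

lemma integral_exp_convolution_borel:
  fixes w :: "real \<Rightarrow> real"
  assumes wb: "w \<in> borel_measurable borel" and w0: "\<And>x. 0 \<le> w x" and wM: "\<And>x. w x \<le> M"
    and l: "l > 0"
  shows "integral {a..s} (\<lambda>u. integral {a..u} (\<lambda>r. exp (l*(u-r)) * w r))
       = integral {a..s} (\<lambda>r. w r * ((exp (l*(s-r)) - 1) / l))"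
proof -
  have wl: "w \<in> borel_measurable lebesgue"
    using wb by (intro measurable_completion) simp
  have wA: "\<bar>w x\<bar> \<le> M" for x
    using w0[of x] wM[of x] by simp
  have int_w: "(\<lambda>r. c r * w r) integrable_on {x..y}" if "continuous_on UNIV c" for c x y
    by (rule integrable_on_continuous_mult_bounded_measurable[OF that wl wA])
  have inner: "integral {r..s} (\<lambda>u. exp (l*(u-r)) * w r) = w r * ((exp (l*(s-r)) - 1) / l)"
    if "r \<in> {a..s}" for r
    using integral_unique[OF has_integral_exp_mult_diff_lower[OF l, of r s]] that by simp
  have "integral {a..s} (\<lambda>u. integral {a..u} (\<lambda>r. exp (l*(u-r)) * w r))
      = integral {a..s} (\<lambda>r. integral {r..s} (\<lambda>u. exp (l*(u-r)) * w r))"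
  proof (rule integral_swap_triangle_nonneg)
    show "case_prod (\<lambda>u r. exp (l*(u-r)) * w r) \<in> borel_measurable (lborel \<Otimes>\<^sub>M lborel)"
      using wb by measurable
    show "(\<lambda>u. integral {a..u} (\<lambda>r. exp (l*(u-r)) * w r)) integrable_on {a..s}"
      by (intro integrable_continuous_interval continuous_on_exp_convolution[OF wl wA])
    have "continuous_on UNIV (\<lambda>r. (exp (l*(s-r)) - 1) / l)"
      using l by (intro continuous_intros) auto
    from int_w[OF this] have "(\<lambda>r. w r * ((exp (l*(s-r)) - 1) / l)) integrable_on {a..s}"
      by (simp add: mult.commute)
    then show "(\<lambda>r. integral {r..s} (\<lambda>u. exp (l*(u-r)) * w r)) integrable_on {a..s}"
      by (rule integrable_eq) (rule inner[symmetric])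
    show "(\<lambda>r. exp (l*(u-r)) * w r) integrable_on {a..u}" for u
      by (intro int_w continuous_intros)
  qed (use w0 in \<open>auto intro!: integrable_continuous_interval continuous_intros\<close>)
  also have "\<dots> = integral {a..s} (\<lambda>r. w r * ((exp (l*(s-r)) - 1) / l))"
    by (rule integral_cong) (rule inner)
  finally show ?thesis .
qed

lemma integral_exp_convolution:
  fixes w :: "real \<Rightarrow> real"
  assumes wl: "w \<in> borel_measurable lebesgue" and w0: "\<And>x. 0 \<le> w x" and wM: "\<And>x. w x \<le> M"
    and l: "l > 0"
  shows "integral {a..s} (\<lambda>u. integral {a..u} (\<lambda>r. exp (l*(u-r)) * w r))
       = integral {a..s} (\<lambda>r. w r * ((exp (l*(s-r)) - 1) / l))"
proof -
  obtain w' where w'b: "w' \<in> borel_measurable lborel" and "AE x in lborel. w x = w' x"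
    using completion_ex_borel_measurable_real[OF wl] by blast
  define w2 where "w2 x = max 0 (min M (w' x))" for x
  have w2b: "w2 \<in> borel_measurable borel"
    using w'b unfolding w2_def by measurable
  have w_w2: "AE x in lborel. w x = w2 x"
    using \<open>AE x in lborel. w x = w' x\<close>
    by eventually_elim (metis w0 wM w2_def max.absorb2 min.absorb2)
  have w2_0: "0 \<le> w2 x" and w2_M: "w2 x \<le> M" for x
    using w0[of x] wM[of x] by (auto simp: w2_def)
  have eq_V: "integral {a..u} (\<lambda>r. exp (l*(u-r)) * w r) = integral {a..u} (\<lambda>r. exp (l*(u-r)) * w2 r)" for u
    by (rule integral_cong_AE_lborel) (use w_w2 in \<open>eventually_elim, simp\<close>)
  have eq_K: "integral {a..s} (\<lambda>r. w r * ((exp (l*(s-r)) - 1) / l))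
               = integral {a..s} (\<lambda>r. w2 r * ((exp (l*(s-r)) - 1) / l))"
    by (rule integral_cong_AE_lborel) (use w_w2 in \<open>eventually_elim, simp\<close>)
  show ?thesis
    unfolding eq_V eq_K by (rule integral_exp_convolution_borel[OF w2b w2_0 w2_M l])
qed

lemma integral_equation_exp_convolution:
  fixes w :: "real \<Rightarrow> real"
  assumes wl: "w \<in> borel_measurable lebesgue" and w0: "\<And>x. 0 \<le> w x" and wM: "\<And>x. w x \<le> M"
    and l: "l > 0"
  shows "integral {a..s} (\<lambda>r. exp (l*(s-r)) * w r)
       = integral {a..s} w + l * integral {a..s} (\<lambda>u. integral {a..u} (\<lambda>r. exp (l*(u-r)) * w r))"
proof -
  have wA: "\<bar>w x\<bar> \<le> M" for x
    using w0[of x] wM[of x] by simp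
  have int_w: "(\<lambda>r. c r * w r) integrable_on {a..s}" if "continuous_on UNIV c" for c
    by (rule integrable_on_continuous_mult_bounded_measurable[OF that wl wA])
  have "l * integral {a..s} (\<lambda>u. integral {a..u} (\<lambda>r. exp (l*(u-r)) * w r))
      = integral {a..s} (\<lambda>r. l * (w r * ((exp (l*(s-r)) - 1) / l)))"
    by (simp add: integral_exp_convolution[OF wl w0 wM l])
  also have "\<dots> = integral {a..s} (\<lambda>r. exp (l*(s-r)) * w r - 1 * w r)"
    using l by (intro integral_cong) (simp add: field_simps)
  also have "\<dots> = integral {a..s} (\<lambda>r. exp (l*(s-r)) * w r) - integral {a..s} w"
    by (subst integral_diff) (auto intro!: int_w[of "\<lambda>_. 1", simplified] int_w continuous_intros)
  finally show ?thesis by simp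
qed

lemma gronwall_linear_nonpos:
  fixes D :: "real \<Rightarrow> real"
  assumes D: "continuous_on {a..b} D" and l: "l \<ge> 0"
    and H: "\<And>s. s \<in> {a..b} \<Longrightarrow> D s \<le> l * integral {a..s} D"
    and s: "s \<in> {a..b}"
  shows "D s \<le> 0"
proof -
  define P where "P x = exp (-l*x) * integral {a..x} D" for x
  have "P s \<le> P a"
  proof (rule DERIV_nonpos_imp_decreasing_open[of a s P])
    show "a \<le> s" using s by simp
    have "continuous_on {a..s} (\<lambda>x. integral {a..x} D)"
      using s by (intro indefinite_integral_continuous_1 integrable_continuous_interval
          continuous_on_subset[OF D]) auto
    then show "continuous_on {a..s} P"
      unfolding P_def by (intro continuous_intros)
    fix x assume x: "a < x" "x < s"
    have "((\<lambda>x. integral {a..x} D) has_real_derivative D x) (at x within {a..b})"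
      by (rule integral_has_real_derivative[OF D]) (use x s in auto)
    then have "((\<lambda>x. integral {a..x} D) has_real_derivative D x) (at x)"
      using at_within_interior[of x "{a..b}"] x s by simp
    then have "(P has_real_derivative exp (-l*x) * (D x - l * integral {a..x} D)) (at x)"
      unfolding P_def by (auto intro!: derivative_eq_intros simp: algebra_simps)
    moreover have "exp (-l*x) * (D x - l * integral {a..x} D) \<le> 0"
      using H[of x] x s by (simp add: mult_nonneg_nonpos)
    ultimately show "\<exists>y. (P has_real_derivative y) (at x) \<and> y \<le> 0" by blast
  qed
  then have "integral {a..s} D \<le> 0"
    by (simp add: P_def mult_le_0_iff)
  then show ?thesis
    using H[OF s] mult_nonneg_nonpos[OF l] by fastforce
qed

lemma le_exp_convolution_if_le_integral:
  fixes e w :: "real \<Rightarrow> real"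
  assumes l: "l > 0" and e: "continuous_on {a..b} e"
    and wl: "w \<in> borel_measurable lebesgue" and w0: "\<And>x. 0 \<le> w x" and wM: "\<And>x. w x \<le> M"
    and H: "\<And>s. s \<in> {a..b} \<Longrightarrow> e s \<le> integral {a..s} (\<lambda>r. w r + l * e r)"
    and s: "s \<in> {a..b}"
  shows "e s \<le> integral {a..s} (\<lambda>r. exp (l*(s-r)) * w r)"
proof -
  define V where "V s = integral {a..s} (\<lambda>r. exp (l*(s-r)) * w r)" for s
  have wA: "\<bar>w x\<bar> \<le> M" for x
    using w0[of x] wM[of x] by simp
  have V: "continuous_on {a..b} V"
    unfolding V_def by (rule continuous_on_exp_convolution[OF wl wA])
  have int_w: "w integrable_on {a..x}" for x
    using integrable_on_continuous_mult_bounded_measurable[of "\<lambda>_. 1", OF _ wl wA] by simp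
  have int_e: "e integrable_on {a..x}" and int_V: "V integrable_on {a..x}" if "x \<in> {a..b}" for x
    using that by (auto intro!: integrable_continuous_interval continuous_on_subset[OF e]
        continuous_on_subset[OF V])
  have "e s - V s \<le> 0"
  proof (rule gronwall_linear_nonpos[where D="\<lambda>s. e s - V s" and l=l])
    show "continuous_on {a..b} (\<lambda>s. e s - V s)"
      by (intro continuous_intros e V)
    fix x assume x: "x \<in> {a..b}"
    have "e x \<le> integral {a..x} w + l * integral {a..x} e"
      using H[OF x] integral_add[OF int_w integrable_on_mult_right[OF int_e[OF x]], of l] by simp
    moreover have "V x = integral {a..x} w + l * integral {a..x} V"
      unfolding V_def by (rule integral_equation_exp_convolution[OF wl w0 wM l])
    ultimately show "e x - V x \<le> l * integral {a..x} (\<lambda>s. e s - V s)"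
      using int_e[OF x] int_V[OF x] by (simp add: integral_diff right_diff_distrib)
  qed (use l s in auto)
  then show ?thesis
    by (simp add: V_def)
qed

lemma conjugate_exponent_eq:
  fixes p q :: real
  assumes "p > 1" "1/p + 1/q = 1"
  shows "q = p / (p-1)"
proof -
  have "1/q = (p-1)/p"
    using assms by (simp add: field_simps)
  then show ?thesis
    by (metis inverse_divide inverse_eq_divide inverse_inverse_eq)
qed

lemma integral_mult_le_Young:
  fixes f g :: "real \<Rightarrow> real"
  assumes p: "p > 1" and pq: "1/p + 1/q = 1" and t: "t > 0"
    and f0: "\<And>x. x \<in> {a..b} \<Longrightarrow> 0 \<le> f x" and g0: "\<And>x. x \<in> {a..b} \<Longrightarrow> 0 \<le> g x"
    and int_fg: "(\<lambda>x. f x * g x) integrable_on {a..b}"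
    and int_f: "(\<lambda>x. f x powr q) integrable_on {a..b}"
    and int_g: "(\<lambda>x. g x powr p) integrable_on {a..b}"
  shows "integral {a..b} (\<lambda>x. f x * g x)
    \<le> t powr p / p * integral {a..b} (\<lambda>x. g x powr p) + integral {a..b} (\<lambda>x. f x powr q) / (q * t powr q)"
proof -
  have "q > 1"
    unfolding conjugate_exponent_eq[OF p pq] using p by (simp add: field_simps)
  have Young: "f x * g x \<le> t powr p / p * g x powr p + 1 / (q * t powr q) * f x powr q"
    if x: "x \<in> {a..b}" for x
  proof -
    have "f x * g x = (t * g x) * (f x / t)"
      using t by simp
    also have "\<dots> \<le> (t * g x) powr p / p + (f x / t) powr q / q"
      by (rule Youngs_inequality[OF p \<open>q > 1\<close> pq]) (use t f0[OF x] g0[OF x] in auto)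
    also have "\<dots> = t powr p / p * g x powr p + 1 / (q * t powr q) * f x powr q"
      using t f0[OF x] g0[OF x] by (simp add: powr_mult powr_divide)
    finally show ?thesis .
  qed
  have "integral {a..b} (\<lambda>x. f x * g x)
      \<le> integral {a..b} (\<lambda>x. t powr p / p * g x powr p + 1 / (q * t powr q) * f x powr q)"
    using Young by (intro integral_le int_fg integrable_add integrable_on_mult_right int_g int_f) auto
  also have "\<dots> = t powr p / p * integral {a..b} (\<lambda>x. g x powr p)
                  + 1 / (q * t powr q) * integral {a..b} (\<lambda>x. f x powr q)"
    unfolding integral_add[OF integrable_on_mult_right[OF int_g] integrable_on_mult_right[OF int_f]] by simp
  finally show ?thesis
    by simp
qed

lemma Holder_integral:
  fixes f g :: "real \<Rightarrow> real"
  assumes p: "p > 1" and pq: "1/p + 1/q = 1"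
    and f0: "\<And>x. x \<in> {a..b} \<Longrightarrow> 0 \<le> f x" and g0: "\<And>x. x \<in> {a..b} \<Longrightarrow> 0 \<le> g x"
    and int_fg: "(\<lambda>x. f x * g x) integrable_on {a..b}"
    and int_f: "(\<lambda>x. f x powr q) integrable_on {a..b}"
    and int_g: "(\<lambda>x. g x powr p) integrable_on {a..b}"
    and A_pos: "integral {a..b} (\<lambda>x. f x powr q) > 0"
  shows "(integral {a..b} (\<lambda>x. f x * g x)) powr p
         \<le> (integral {a..b} (\<lambda>x. f x powr q)) powr (p-1) * integral {a..b} (\<lambda>x. g x powr p)"
proof -
  define S where "S = integral {a..b} (\<lambda>x. f x * g x)"
  define A where "A = integral {a..b} (\<lambda>x. f x powr q)"
  define B where "B = integral {a..b} (\<lambda>x. g x powr p)"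
  have "S \<ge> 0"
    unfolding S_def by (rule integral_nonneg[OF int_fg]) (use f0 g0 in auto)
  have "B \<ge> 0"
    unfolding B_def by (rule integral_nonneg[OF int_g]) auto
  show ?thesis
  proof (cases "S = 0")
    case True
    then show ?thesis
      using p \<open>B \<ge> 0\<close> by (simp add: S_def B_def)
  next
    case False
    with \<open>S \<ge> 0\<close> have "S > 0"
      by simp
    have "A > 0"
      using A_pos by (simp add: A_def)
    \<comment> \<open>This scaling makes Young's inequality for \<open>t * g x\<close> and \<open>f x / t\<close> sharp.\<close>
    define t where "t = (A/S) powr (1/q)"
    have "t > 0"
      using \<open>A > 0\<close> \<open>S > 0\<close> by (simp add: t_def)
    have "q > 1" "p / q = p - 1"
      unfolding conjugate_exponent_eq[OF p pq] using p by (simp_all add: field_simps)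
    then have tq: "t powr q = A/S" and tp: "t powr p = (A/S) powr (p-1)"
      using \<open>A > 0\<close> \<open>S > 0\<close> by (auto simp: t_def powr_powr)
    have "S \<le> t powr p / p * B + A / (q * t powr q)"
      unfolding S_def A_def B_def
      by (rule integral_mult_le_Young[OF p pq \<open>t > 0\<close> f0 g0 int_fg int_f int_g])
    also have "\<dots> = (A/S) powr (p-1) / p * B + S / q"
      using \<open>A > 0\<close> \<open>S > 0\<close> by (simp add: tq tp)
    finally have "S \<le> (A/S) powr (p-1) / p * B + S / q" .
    moreover have "S / p + S / q = S"
      using arg_cong[OF pq, of "\<lambda>x. S * x"] by (simp add: distrib_left)
    ultimately have "S \<le> (A/S) powr (p-1) * B"
      using p by (simp add: field_simps)
    then have "S * S powr (p-1) \<le> A powr (p-1) * B"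
      using \<open>A > 0\<close> \<open>S > 0\<close> by (simp add: powr_divide field_simps)
    moreover have "S powr p = S * S powr (p-1)"
      using \<open>S > 0\<close> by (simp add: powr_diff)
    ultimately show ?thesis
      by (simp add: S_def A_def B_def)
  qed
qed

lemma integrable_on_continuous_mult_powr:
  fixes c w :: "real \<Rightarrow> real"
  assumes c: "continuous_on UNIV c" and w: "w \<in> borel_measurable lebesgue"
    and w0: "\<And>x. 0 \<le> w x" and wM: "\<And>x. w x \<le> M" and p: "p \<ge> 0"
  shows "(\<lambda>r. c r * w r powr p) integrable_on {x..y}"
proof (rule integrable_on_continuous_mult_bounded_measurable[OF c])
  show "(\<lambda>r. w r powr p) \<in> borel_measurable lebesgue"
    using w by measurable
  show "\<bar>w r powr p\<bar> \<le> M powr p" for r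
    using w0[of r] wM[of r] p by (simp add: powr_mono2)
qed

lemma exp_convolution_powr_le_Holder:
  fixes w :: "real \<Rightarrow> real"
  assumes l: "l > 0" and p: "p > 1" and "a < s"
    and wl: "w \<in> borel_measurable lebesgue" and w0: "\<And>x. 0 \<le> w x" and wM: "\<And>x. w x \<le> M"
  shows "(integral {a..s} (\<lambda>r. exp (l*(s-r)) * w r)) powr p
    \<le> ((exp (l*p/(2*(p-1))*(s-a)) - 1) / (l*p/(2*(p-1)))) powr (p-1)
       * integral {a..s} (\<lambda>r. exp (l*p/2*(s-r)) * w r powr p)"
proof -
  define q where "q = p / (p-1)"
  define al where "al = l*p/(2*(p-1))"
  have "al > 0"
    using l p by (simp add: al_def)
  have pq: "1/p + 1/q = 1"
    using p by (simp add: q_def field_simps)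
  define f where "f r = exp (l*(s-r)/2)" for r
  define g where "g r = exp (l*(s-r)/2) * w r" for r
  have fg: "f r * g r = exp (l*(s-r)) * w r" for r
    by (simp add: f_def g_def mult.assoc[symmetric] exp_add[symmetric])
  have fq: "f r powr q = exp (al*(s-r))" for r
    using p unfolding f_def exp_powr_real al_def q_def by (simp add: field_simps)
  have gp: "g r powr p = exp (l*p/2*(s-r)) * w r powr p" for r
    using w0[of r] unfolding g_def by (simp add: powr_mult exp_powr_real field_simps)
  have int_fq: "integral {a..s} (\<lambda>r. f r powr q) = (exp (al*(s-a)) - 1) / al"
    unfolding fq using has_integral_exp_mult_diff_upper[OF \<open>al > 0\<close>, of a s] \<open>a < s\<close>
    by (simp add: integral_unique)
  have "(integral {a..s} (\<lambda>r. f r * g r)) powr p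
      \<le> (integral {a..s} (\<lambda>r. f r powr q)) powr (p-1) * integral {a..s} (\<lambda>r. g r powr p)"
  proof (rule Holder_integral[OF p pq])
    show "(\<lambda>x. f x * g x) integrable_on {a..s}"
      unfolding fg using w0 wM
      by (intro integrable_on_continuous_mult_bounded_measurable[OF _ wl] continuous_intros) auto
    show "(\<lambda>x. f x powr q) integrable_on {a..s}"
      unfolding fq by (intro integrable_continuous_interval continuous_intros)
    show "(\<lambda>x. g x powr p) integrable_on {a..s}"
      unfolding gp using p by (intro integrable_on_continuous_mult_powr[OF _ wl w0 wM] continuous_intros) auto
    show "integral {a..s} (\<lambda>r. f r powr q) > 0"
      unfolding int_fq using \<open>al > 0\<close> \<open>a < s\<close> by (simp add: divide_pos_pos)
  qed (use w0 in \<open>auto simp: f_def g_def\<close>)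
  then show ?thesis
    unfolding fg gp int_fq al_def .
qed

lemma exp_convolution_powr_le:
  fixes w :: "real \<Rightarrow> real"
  assumes l: "l > 0" and p: "p > 1"
    and wl: "w \<in> borel_measurable lebesgue" and w0: "\<And>x. 0 \<le> w x" and wM: "\<And>x. w x \<le> M"
  shows "(integral {a..s} (\<lambda>r. exp (l*(s-r)) * w r)) powr p
    \<le> ((exp (l*p/(2*(p-1))*(s-a)) - 1) / (l*p/(2*(p-1)))) powr (p-1)
       * exp (l*p/2*(s-a)) * integral {a..s} (\<lambda>r. w r powr p)"
proof (cases "a < s")
  case False
  then have "integral {a..s} (\<lambda>r. exp (l*(s-r)) * w r) = 0"
    by (cases "a = s") auto
  moreover have "0 \<le> integral {a..s} (\<lambda>r. w r powr p)"
    using False by (cases "a = s") auto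
  ultimately show ?thesis
    using p by simp
next
  case True
  have int_wp: "(\<lambda>r. c r * w r powr p) integrable_on {a..s}" if "continuous_on UNIV c" for c
    using p by (intro integrable_on_continuous_mult_powr[OF that wl w0 wM]) simp
  have "integral {a..s} (\<lambda>r. exp (l*p/2*(s-r)) * w r powr p)
      \<le> integral {a..s} (\<lambda>r. exp (l*p/2*(s-a)) * w r powr p)"
  proof (rule integral_le)
    fix r assume "r \<in> {a..s}"
    then have "exp (l*p/2*(s-r)) \<le> exp (l*p/2*(s-a))"
      using l p by (simp add: mult_left_mono)
    then show "exp (l*p/2*(s-r)) * w r powr p \<le> exp (l*p/2*(s-a)) * w r powr p"
      by (rule mult_right_mono) simp
  qed (intro int_wp continuous_intros)+
  then have "((exp (l*p/(2*(p-1))*(s-a)) - 1) / (l*p/(2*(p-1)))) powr (p-1)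
      * integral {a..s} (\<lambda>r. exp (l*p/2*(s-r)) * w r powr p)
    \<le> ((exp (l*p/(2*(p-1))*(s-a)) - 1) / (l*p/(2*(p-1)))) powr (p-1)
      * (exp (l*p/2*(s-a)) * integral {a..s} (\<lambda>r. w r powr p))"
    by (intro mult_left_mono) simp_all
  with exp_convolution_powr_le_Holder[OF l p True wl w0 wM] show ?thesis
    by (simp add: mult_ac)
qed

lemma psi_eq:
  assumes l: "l > 0" and p: "p > 1" and T: "T \<ge> 0"
  shows "psi p l T = 2 powr p * ((exp (l*p/(2*(p-1))*T) - 1) / (l*p/(2*(p-1)))) powr (p-1)
           * ((exp (l*p/2*T) - 1) / (l*p/2))"
proof -
  define al where "al = l*p/(2*(p-1))"
  define X where "X = exp (al*T) - 1"
  have "al > 0" "X \<ge> 0"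
    using l p T by (auto simp: al_def X_def)
  have "(X / al) powr (p-1) = X powr (p-1) * (2 powr (p-1) * (p-1) powr (p-1))
                                / (l powr (p-1) * p powr (p-1))"
    unfolding al_def by (simp only: powr_divide powr_mult) (use l p in simp)
  moreover have "l powr p = l powr (p-1) * l" "p powr p = p powr (p-1) * p"
    "(2::real) powr (2*p) = 2 powr p * 2 powr (p-1) * 2"
    using l p by (simp_all add: powr_diff powr_add[symmetric])
  ultimately show ?thesis
    unfolding psi_def al_def[symmetric] X_def[symmetric] using l p by (simp add: field_simps)
qed

lemma psi_nonneg:
  assumes "l > 0" "p > 1" "T \<ge> 0"
  shows "psi p l T \<ge> 0"
  using assms unfolding psi_def by (intro mult_nonneg_nonneg divide_nonneg_nonneg) auto

lemma psi_mono:
  assumes "l > 0" "p > 1" "0 \<le> T" "T \<le> T'"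
  shows "psi p l T \<le> psi p l T'"
  using assms unfolding psi_def
  by (intro mult_mono mult_left_mono powr_mono2 divide_nonneg_nonneg mult_nonneg_nonneg)
     (auto intro!: divide_right_mono)

lemma powr_add_le_two_powr:
  fixes x y p :: real
  assumes x: "0 \<le> x" and y: "0 \<le> y" and p: "1 \<le> p"
  shows "(x + y) powr p \<le> 2 powr (p-1) * (x powr p + y powr p)"
proof (cases "x = 0 \<or> y = 0")
  case True
  have "1 \<le> 2 powr (p-1)"
    using p by (simp add: ge_one_powr_ge_zero)
  then show ?thesis
    using True by (auto simp: mult_le_cancel_right1)
next
  case False
  then have "((1/2) * x + (1/2) * y) powr p \<le> (1/2) * x powr p + (1/2) * y powr p"
    using convex_onD[OF powr_convex[OF p], of "1/2" x y] x y by simp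
  then have "((x + y) / 2) powr p \<le> (x powr p + y powr p) / 2"
    by (simp add: field_simps)
  have "(x + y) powr p = 2 powr p * ((x + y) / 2) powr p"
    by (simp add: powr_divide)
  also have "\<dots> \<le> 2 powr p * ((x powr p + y powr p) / 2)"
    using \<open>((x + y) / 2) powr p \<le> (x powr p + y powr p) / 2\<close> by (rule mult_left_mono) simp
  also have "\<dots> = 2 powr (p-1) * (x powr p + y powr p)"
    by (simp add: powr_diff)
  finally show ?thesis .
qed

lemma gronwall_integral_powr_le_psi:
  fixes e w :: "real \<Rightarrow> real"
  assumes ab: "a \<le> b" and l: "l > 0" and p: "p > 1"
    and e: "continuous_on {a..b} e" and e0: "\<And>s. s \<in> {a..b} \<Longrightarrow> 0 \<le> e s"
    and wl: "w \<in> borel_measurable lebesgue" and w0: "\<And>x. 0 \<le> w x" and wM: "\<And>x. w x \<le> M"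
    and H: "\<And>s. s \<in> {a..b} \<Longrightarrow> e s \<le> integral {a..s} (\<lambda>r. w r + l * e r)"
  shows "2 powr p * integral {a..b} (\<lambda>s. e s powr p) \<le> psi p l (b - a) * integral {a..b} (\<lambda>s. w s powr p)"
proof -
  define al where "al = l*p/(2*(p-1))"
  define be where "be = l*p/2"
  have "al > 0" "be > 0"
    using l p by (auto simp: al_def be_def)
  define C where "C = ((exp (al*(b-a)) - 1) / al) powr (p-1) * integral {a..b} (\<lambda>r. w r powr p)"
  have int_wp: "(\<lambda>r. w r powr p) integrable_on {x..y}" for x y
    using integrable_on_continuous_mult_powr[of "\<lambda>_. 1", OF _ wl w0 wM] p by simp
  have pointwise: "e s powr p \<le> C * exp (be*(s-a))" if s: "s \<in> {a..b}" for s
  proof -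
    have "e s powr p \<le> (integral {a..s} (\<lambda>r. exp (l*(s-r)) * w r)) powr p"
      using le_exp_convolution_if_le_integral[OF l e wl w0 wM H s] e0[OF s] p by (simp add: powr_mono2)
    also have "\<dots> \<le> ((exp (al*(s-a)) - 1) / al) powr (p-1) * exp (be*(s-a))
                    * integral {a..s} (\<lambda>r. w r powr p)"
      unfolding al_def be_def by (rule exp_convolution_powr_le[OF l p wl w0 wM])
    also have "\<dots> \<le> C * exp (be*(s-a))"
      unfolding C_def mult.assoc[symmetric] mult.commute[of _ "exp _"]
    proof (intro mult_left_mono mult_mono powr_mono2 divide_right_mono)
      show "integral {a..s} (\<lambda>r. w r powr p) \<le> integral {a..b} (\<lambda>r. w r powr p)"
        using s by (intro integral_subset_le int_wp) auto
    qed (use s \<open>al > 0\<close> p in \<open>auto intro!: integral_nonneg int_wp\<close>)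
    finally show ?thesis .
  qed
  have "integral {a..b} (\<lambda>s. e s powr p) \<le> integral {a..b} (\<lambda>s. C * exp (be*(s-a)))"
    using pointwise e e0 p
    by (intro integral_le integrable_continuous_interval continuous_on_powr' continuous_intros) auto
  then have "2 powr p * integral {a..b} (\<lambda>s. e s powr p)
      \<le> 2 powr p * integral {a..b} (\<lambda>s. C * exp (be*(s-a)))"
    by (rule mult_left_mono) simp
  also have "\<dots> = 2 powr p * (C * ((exp (be*(b-a)) - 1) / be))"
    using has_integral_exp_mult_diff_lower[OF \<open>be > 0\<close> ab] by (simp add: integral_unique)
  also have "\<dots> = psi p l (b - a) * integral {a..b} (\<lambda>s. w s powr p)"
    using psi_eq[OF l p] ab unfolding C_def al_def be_def by (simp add: mult_ac)
  finally show ?thesis .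
qed

lemma gronwall_integral_powr_le_psi_on:
  fixes e w :: "real \<Rightarrow> real"
  assumes ab: "a \<le> b" and l: "l > 0" and p: "p > 1"
    and e: "continuous_on {a..b} e" and e0: "\<And>s. s \<in> {a..b} \<Longrightarrow> 0 \<le> e s"
    and w: "w \<in> borel_measurable (lebesgue_on {a..b})" "bounded (w ` {a..b})"
    and w0: "\<And>s. s \<in> {a..b} \<Longrightarrow> 0 \<le> w s"
    and H: "\<And>s. s \<in> {a..b} \<Longrightarrow> e s \<le> integral {a..s} (\<lambda>r. w r + l * e r)"
  shows "2 powr p * integral {a..b} (\<lambda>s. e s powr p) \<le> psi p l (b - a) * integral {a..b} (\<lambda>s. w s powr p)"
proof -
  define w' where "w' s = (if s \<in> {a..b} then w s else 0)" for s
  obtain M where "\<forall>y\<in>w ` {a..b}. norm y \<le> M"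
    using w(2) by (auto simp: bounded_iff)
  then have "w s \<le> \<bar>M\<bar>" if "s \<in> {a..b}" for s
    using that by force
  then have w'0: "0 \<le> w' s" and w'M: "w' s \<le> \<bar>M\<bar>" for s
    using w0[of s] by (auto simp: w'_def)
  have w'_meas: "w' \<in> borel_measurable lebesgue"
    unfolding w'_def by (rule borel_measurable_if_I[OF w(1)]) simp
  have "e s \<le> integral {a..s} (\<lambda>r. w' r + l * e r)" if s: "s \<in> {a..b}" for s
  proof -
    have "integral {a..s} (\<lambda>r. w' r + l * e r) = integral {a..s} (\<lambda>r. w r + l * e r)"
      by (rule integral_cong) (use s in \<open>auto simp: w'_def\<close>)
    then show ?thesis
      using H[OF s] by simp
  qed
  moreover have "integral {a..b} (\<lambda>s. w' s powr p) = integral {a..b} (\<lambda>s. w s powr p)"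
    by (rule integral_cong) (simp add: w'_def)
  ultimately show ?thesis
    using gronwall_integral_powr_le_psi[OF ab l p e e0 w'_meas w'0 w'M] by simp
qed

lemma integral_powr_add_le:
  fixes u v :: "real \<Rightarrow> real"
  assumes p: "p \<ge> 1" and u: "\<And>x. x \<in> S \<Longrightarrow> 0 \<le> u x" and v: "\<And>x. x \<in> S \<Longrightarrow> 0 \<le> v x"
    and int_uv: "(\<lambda>x. (u x + v x) powr p) integrable_on S"
    and int_u: "(\<lambda>x. u x powr p) integrable_on S" and int_v: "(\<lambda>x. v x powr p) integrable_on S"
  shows "integral S (\<lambda>x. (u x + v x) powr p)
    \<le> 2 powr (p-1) * (integral S (\<lambda>x. u x powr p) + integral S (\<lambda>x. v x powr p))"
proof -
  have "integral S (\<lambda>x. (u x + v x) powr p) \<le> integral S (\<lambda>x. 2 powr (p-1) * (u x powr p + v x powr p))"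
    using powr_add_le_two_powr u v p
    by (intro integral_le int_uv integrable_on_mult_right integrable_add int_u int_v) auto
  also have "\<dots> = 2 powr (p-1) * (integral S (\<lambda>x. u x powr p) + integral S (\<lambda>x. v x powr p))"
    by (simp add: integral_add[OF int_u int_v])
  finally show ?thesis .
qed

lemma gronwall_integral_powr_add_le_psi:
  fixes e u v :: "real \<Rightarrow> real"
  assumes ab: "a \<le> b" and T: "b - a \<le> T" and l: "l > 0" and p: "p > 1"
    and e: "continuous_on {a..b} e" and e0: "\<And>s. s \<in> {a..b} \<Longrightarrow> 0 \<le> e s"
    and u: "u \<in> borel_measurable (lebesgue_on {a..b})" "bounded (u ` {a..b})"
    and v: "v \<in> borel_measurable (lebesgue_on {a..b})" "bounded (v ` {a..b})"
    and u0: "\<And>s. s \<in> {a..b} \<Longrightarrow> 0 \<le> u s" and v0: "\<And>s. s \<in> {a..b} \<Longrightarrow> 0 \<le> v s"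
    and H: "\<And>s. s \<in> {a..b} \<Longrightarrow> e s \<le> integral {a..s} (\<lambda>r. u r + v r + l * e r)"
  shows "integral {a..b} (\<lambda>s. e s powr p)
    \<le> psi p l T * (integral {a..b} (\<lambda>s. u s powr p) + integral {a..b} (\<lambda>s. v s powr p))"
proof -
  define S where "S = integral {a..b} (\<lambda>s. u s powr p) + integral {a..b} (\<lambda>s. v s powr p)"
  have int_p: "(\<lambda>s. f s powr p) integrable_on {a..b}"
    if "f \<in> borel_measurable (lebesgue_on {a..b})" "bounded (f ` {a..b})" "\<And>s. s \<in> {a..b} \<Longrightarrow> 0 \<le> f s"
    for f
    using that p by (intro integrable_on_powr_bounded_measurable) auto
  have uv: "(\<lambda>s. u s + v s) \<in> borel_measurable (lebesgue_on {a..b})" "bounded ((\<lambda>s. u s + v s) ` {a..b})"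
    using u v bounded_plus_comp[OF u(2) v(2)] by measurable
  have "0 \<le> S"
    unfolding S_def using u v u0 v0 by (intro add_nonneg_nonneg integral_nonneg int_p) auto
  have "2 powr p * integral {a..b} (\<lambda>s. e s powr p)
      \<le> psi p l (b - a) * integral {a..b} (\<lambda>s. (u s + v s) powr p)"
    using u0 v0 by (intro gronwall_integral_powr_le_psi_on[OF ab l p e e0 uv] H) auto
  also have "\<dots> \<le> psi p l (b - a) * (2 powr (p-1) * S)"
    unfolding S_def using psi_nonneg[OF l p] ab p u v uv u0 v0
    by (intro mult_left_mono integral_powr_add_le int_p add_nonneg_nonneg) auto
  also have "\<dots> \<le> psi p l T * (2 powr (p-1) * S)"
    using psi_mono[OF l p, of "b - a" T] ab T \<open>0 \<le> S\<close> by (intro mult_right_mono) auto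
  finally have "2 * integral {a..b} (\<lambda>s. e s powr p) \<le> psi p l T * S"
    by (simp add: powr_diff)
  moreover have "0 \<le> psi p l T * S"
    using psi_nonneg[OF l p, of T] ab T \<open>0 \<le> S\<close> by simp
  ultimately show ?thesis
    unfolding S_def by linarith
qed

lemma norm_diff_le_integral_bound:
  fixes F x :: "real \<Rightarrow> 'a::euclidean_space"
  assumes F: "(F has_integral (x s - x a)) {a..s}" and h: "h integrable_on {a..s}"
    and F_le: "\<And>r. r \<in> {a..s} \<Longrightarrow> norm (F r) \<le> h r"
  shows "norm (x a - x s) \<le> integral {a..s} h"
  using integral_norm_bound_integral[OF has_integral_integrable[OF F] h F_le] integral_unique[OF F]
  by (simp add: norm_minus_commute)

lemma sampled_error_integral_powr_le:
  fixes xi :: "real \<Rightarrow> 'a::euclidean_space" and d :: "real \<Rightarrow> 'b::euclidean_space"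
    and F :: "real \<Rightarrow> 'a"
  assumes T: "hi - lo \<le> T" and p: "p > 1" and l: "l1 > 0" "l2 > 0" "l3 > 0"
    and xi: "continuous_on {lo..hi} xi"
    and d_meas: "d \<in> borel_measurable (lebesgue_on {lo..hi})" and d_bdd: "bounded (d ` {lo..hi})"
    and F_int: "\<And>s. s \<in> {lo..hi} \<Longrightarrow> (F has_integral (xi s - xi lo)) {lo..s}"
    and F_le: "\<And>s. s \<in> {lo..hi} \<Longrightarrow>
      norm (F s) \<le> l1 * norm (xi s) + l2 * norm (xi lo - xi s) + l3 * norm (d s)"
  shows "integral {lo..hi} (\<lambda>s. norm (xi lo - xi s) powr p)
    \<le> l1 powr p * psi p l2 T * integral {lo..hi} (\<lambda>s. norm (xi s) powr p)
      + l3 powr p * psi p l2 T * integral {lo..hi} (\<lambda>s. norm (d s) powr p)"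
proof (cases "lo \<le> hi")
  case False
  then show ?thesis by simp
next
  case True
  define u where "u s = l1 * norm (xi s)" for s
  define v where "v s = l3 * norm (d s)" for s
  have "xi \<in> borel_measurable (lebesgue_on {lo..hi})"
    by (rule continuous_imp_measurable_on_sets_lebesgue[OF xi]) simp
  then have u: "u \<in> borel_measurable (lebesgue_on {lo..hi})" "bounded (u ` {lo..hi})"
    using bounded_scaleR_comp[of "\<lambda>s. norm (xi s)" _ l1] compact_continuous_image[OF xi]
    unfolding u_def by (measurable, simp add: bounded_norm_comp compact_imp_bounded)
  have v: "v \<in> borel_measurable (lebesgue_on {lo..hi})" "bounded (v ` {lo..hi})"
    using d_meas bounded_scaleR_comp[of "\<lambda>s. norm (d s)" _ l3] d_bdd
    unfolding v_def by (measurable, simp add: bounded_norm_comp)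
  have H: "norm (xi lo - xi s) \<le> integral {lo..s} (\<lambda>r. u r + v r + l2 * norm (xi lo - xi r))"
    if s: "s \<in> {lo..hi}" for s
  proof (rule norm_diff_le_integral_bound[OF F_int[OF s]])
    have "(\<lambda>r. u r + v r + l2 * norm (xi lo - xi r)) integrable_on {lo..hi}"
      by (intro integrable_add integrable_on_bounded_measurable_real u v
          integrable_continuous_interval continuous_intros xi)
    then show "(\<lambda>r. u r + v r + l2 * norm (xi lo - xi r)) integrable_on {lo..s}"
      by (rule integrable_on_subinterval) (use s in auto)
    show "norm (F r) \<le> u r + v r + l2 * norm (xi lo - xi r)" if "r \<in> {lo..s}" for r
      using F_le[of r] that s by (simp add: u_def v_def)
  qed
  have "integral {lo..hi} (\<lambda>s. norm (xi lo - xi s) powr p)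
      \<le> psi p l2 T * (integral {lo..hi} (\<lambda>s. u s powr p) + integral {lo..hi} (\<lambda>s. v s powr p))"
    using l by (intro gronwall_integral_powr_add_le_psi[OF True T l(2) p _ _ u v _ _ H])
      (auto intro!: continuous_intros xi simp: u_def v_def)
  then show ?thesis
    by (simp add: u_def v_def powr_mult distrib_left mult_ac)
qed

theorem lemma5:
  fixes f :: "real^'n \<Rightarrow> real^'q \<Rightarrow> real^'n"
    and g :: "real^'n \<Rightarrow> real^'m^'n"
    and gam :: "real^'n \<Rightarrow> real^'m"
    and d :: "real \<Rightarrow> real^'q"
    and xi :: "real \<Rightarrow> real^'n"
    and t :: "nat \<Rightarrow> real"
    and t0 p q lam1 lam2 lam3 c1 c2 c3 c3b mu sigma lam mud :: real
  defines "B1 \<equiv> c1 * sigma - (c3b * lam) powr q / q"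
    and "B3 \<equiv> lam * (mud powr p - mu powr p) - c3"
    and "c \<equiv> c2 + lam2 powr p / p"
  defines "tauhat \<equiv> min (tau_of p lam2 lam1 B1 c) (tau_of p lam2 lam3 B3 c)"
  defines "a \<equiv> lam1 powr p * psi p lam2 tauhat"
    and "b \<equiv> lam3 powr p * psi p lam2 tauhat"
  assumes f_lip: "loc_lipschitz (\<lambda>z. f (fst z) (snd z))"
    and g_lip: "loc_lipschitz g"
    and gam_lip: "loc_lipschitz gam"
    and f0: "f 0 0 = 0"
    and d_meas: "d measurable_on {t0..}"
    and d_Lp: "(\<lambda>s. norm (d s) powr p) integrable_on {t0..}"
    and d_bdd: "bounded (d ` {t0..})"
    and p_gt: "p > 1"
    and pq: "1 / p + 1 / q = 1"
    and t_mono: "strict_mono t"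
    and t_0: "t 0 = t0"
    and xi_cont: "continuous_on {t0..} xi"
    and closed_loop: "\<forall>k. \<forall>s\<in>{t k..t (Suc k)}.
        ((\<lambda>r. f (xi r) (d r) + g (xi r) *v gam (xi (t k))) has_integral (xi s - xi (t k))) {t k..s}"
    and lam_pos: "lam1 > 0" "lam2 > 0" "lam3 > 0"
    and rate: "\<forall>k. \<forall>s\<in>{t k..t (Suc k)}.
        norm (f (xi s) (d s) + g (xi s) *v gam (xi (t k)))
          \<le> lam1 * norm (xi s) + lam2 * norm (xi (t k) - xi s) + lam3 * norm (d s)"
    and consts_pos: "c1 > 0" "c2 > 0" "c3 > 0" "c3b > 0" "mu > 0" "lam > 0"
    and sigma_lt: "sigma < 1"
    and mud_gt: "mud > mu"
    and B_pos: "B1 > 0" "B3 > 0"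
  shows "\<forall>k. integral {t k..min (t k + tauhat) (t (Suc k))} (\<lambda>s. norm (xi (t k) - xi s) powr p)
           \<le> a * integral {t k..min (t k + tauhat) (t (Suc k))} (\<lambda>s. norm (xi s) powr p)
             + b * integral {t k..min (t k + tauhat) (t (Suc k))} (\<lambda>s. norm (d s) powr p)"
proof (intro allI)
  fix k
  define hi where "hi = min (t k + tauhat) (t (Suc k))"
  have "t0 \<le> t k"
    using t_mono by (simp add: t_0[symmetric] strict_mono_less_eq)
  then have sub: "{t k..hi} \<subseteq> {t0..}"
    by auto
  have d_meas_k: "d \<in> borel_measurable (lebesgue_on {t k..hi})"
    using measurable_on_imp_borel_measurable_lebesgue[OF d_meas] sub
    by (auto intro: measurable_restrict_mono)
  show "integral {t k..min (t k + tauhat) (t (Suc k))} (\<lambda>s. norm (xi (t k) - xi s) powr p)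
      \<le> a * integral {t k..min (t k + tauhat) (t (Suc k))} (\<lambda>s. norm (xi s) powr p)
        + b * integral {t k..min (t k + tauhat) (t (Suc k))} (\<lambda>s. norm (d s) powr p)"
    unfolding a_def b_def hi_def[symmetric]
    by (rule sampled_error_integral_powr_le[where F="\<lambda>r. f (xi r) (d r) + g (xi r) *v gam (xi (t k))",
          OF _ p_gt lam_pos continuous_on_subset[OF xi_cont sub] d_meas_k
          bounded_subset[OF d_bdd image_mono[OF sub]]])
       (use closed_loop rate in \<open>auto simp: hi_def\<close>)
qed

end
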